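(* Let $X$ be a compact metric space with metric $d$, let $f\colon X\to X$ be a continuous map with the s-limit shadowing property, let $C\in\mathcal{C}(f)$ and $D\in\mathcal{D}(C)$, and let $\mathcal{G}$ be a full Furstenberg family. Then for every $n\ge2$, the set \[ B=\bigcap_{\epsilon>0}\{(x_1,\dots,x_n)\in[V^s(D)]^n\colon T_f(x_1,\dots,x_n;\epsilon)\in\mathcal{G}\} \] is a dense subset of $[V^s(D)]^n$.
   Context: A $\delta$-chain of $f$ ($\delta>0$) is a finite sequence $(x_i)_{i=0}^k$, $k\ge1$, of points of $X$ with $d(f(x_i),x_{i+1})\le\delta$ for $0\le i\le k-1$; it is a $\delta$-cycle if $x_0=x_k$, and $k$ is its length. Write $x\to y$ if for every $\delta>0$ there is a $\delta$-chain from $x$ to $y$. Let $CR(f)=\{x\in X\colon x\to x\}$; on $CR(f)$ let $x\leftrightarrow y$ iff $x\to y$ and $y\to x$. The equivalence classes of $\leftrightarrow$ are the chain components; $\mathcal{C}(f)$ is the set of chain components. For $C\in\mathcal{C}(f)$ and $\delta>0$, let $m=m(C,\delta)$ be the greatest common divisor of the lengths of all $\delta$-cycles of $f|_C$ (chains consisting of points of $C$), and for $x,y\in C$ let $x\sim_{C,\delta}y$ iff there is a $\delta$-chain $(x_i)_{i=0}^k$ of $f|_C$ with $x_0=x$, $x_k=y$ and $m\mid k$; this is an equivalence relation on $C$, and $\mathcal{D}(C,\delta)$ denotes its (finitely many) equivalence classes. Let $x\sim_C y$ iff $x\sim_{C,\delta}y$ for all $\delta>0$, and let $\mathcal{D}(C)$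 be the set of equivalence classes of $\sim_C$. For $D\in\mathcal{D}(C)$ and $\delta>0$, let $D_\delta$ be the unique element of $\mathcal{D}(C,\delta)$ containing $D$. Define $W^s(C)=\{x\in X\colon\lim_{i\to\infty}d(f^i(x),C)=0\}$ and \[ V^s(D)=\bigcap_{\delta>0}\{x\in W^s(C)\colon\lim_{i\to\infty}d(f^i(x),f^i(D_\delta))=0\}, \] where $d(p,A)=\inf_{a\in A}d(p,a)$. A sequence $(x_i)_{i\ge0}$ is a $\delta$-limit-pseudo orbit if $d(f(x_i),x_{i+1})\le\delta$ for all $i$ and $d(f(x_i),x_{i+1})\to0$; it is $\epsilon$-limit shadowed by $x$ if $d(f^i(x),x_i)\le\epsilon$ for all $i\ge0$ and $d(f^i(x),x_i)\to0$. $f$ has the s-limit shadowing property if for every $\epsilon>0$ there is $\delta>0$ such that every $\delta$-limit-pseudo orbit of $f$ is $\epsilon$-limit shadowed by some point of $X$. A Furstenberg family is a nonempty proper family $\mathcal{F}\subsetneq 2^{\mathbb{N}_0}$ ($\mathbb{N}_0=\{0,1,2,\dots\}$) that is hereditary upward ($A\in\mathcal{F}$, $A\subset B$ implies $B\in\mathcal{F}$). It is full if $\{i\in A\colon i\ge n\}\in\mathcal{F}$ for all $A\in\mathcal{F}$ and $n\ge0$. For $x_1,\dots,x_n\in X$ and $r>0$, $T_f(x_1,\dots,x_n;r)=\{i\in\mathbb{N}_0\colon\max_{1\le j<k\le n}d(f^i(x_j),f^i(x_k))<r\}$. *)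

theory Defs
  imports "HOL-Analysis.Analysis"
begin

definition is_chain :: "('a::metric_space \<Rightarrow> 'a) \<Rightarrow> real \<Rightarrow> (nat \<Rightarrow> 'a) \<Rightarrow> nat \<Rightarrow> bool" where
  "is_chain f \<delta> xi k \<longleftrightarrow> k \<ge> 1 \<and> (\<forall>i<k. dist (f (xi i)) (xi (Suc i)) \<le> \<delta>)"

definition chain_to :: "('a::metric_space \<Rightarrow> 'a) \<Rightarrow> 'a \<Rightarrow> 'a \<Rightarrow> bool" where
  "chain_to f x y \<longleftrightarrow> (\<forall>\<delta>>0. \<exists>xi k. is_chain f \<delta> xi k \<and> xi 0 = x \<and> xi k = y)"

definition CR :: "('a::metric_space \<Rightarrow> 'a) \<Rightarrow> 'a set" where
  "CR f = {x. chain_to f x x}"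

definition chain_components :: "('a::metric_space \<Rightarrow> 'a) \<Rightarrow> 'a set set" where
  "chain_components f = {C. \<exists>x\<in>CR f. C = {y\<in>CR f. chain_to f x y \<and> chain_to f y x}}"

definition chain_in :: "('a::metric_space \<Rightarrow> 'a) \<Rightarrow> 'a set \<Rightarrow> real \<Rightarrow> (nat \<Rightarrow> 'a) \<Rightarrow> nat \<Rightarrow> bool" where
  "chain_in f C \<delta> xi k \<longleftrightarrow> is_chain f \<delta> xi k \<and> (\<forall>i\<le>k. xi i \<in> C)"

definition period_m :: "('a::metric_space \<Rightarrow> 'a) \<Rightarrow> 'a set \<Rightarrow> real \<Rightarrow> nat" where
  "period_m f C \<delta> = Gcd {k. \<exists>xi. chain_in f C \<delta> xi k \<and> xi 0 = xi k}"

definition sim_delta :: "('a::metric_space \<Rightarrow> 'a) \<Rightarrow> 'a set \<Rightarrow> real \<Rightarrow> 'a \<Rightarrow> 'a \<Rightarrow> bool" where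
  "sim_delta f C \<delta> x y \<longleftrightarrow>
     (\<exists>xi k. chain_in f C \<delta> xi k \<and> xi 0 = x \<and> xi k = y \<and> period_m f C \<delta> dvd k)"

definition classes_delta :: "('a::metric_space \<Rightarrow> 'a) \<Rightarrow> 'a set \<Rightarrow> real \<Rightarrow> 'a set set" where
  "classes_delta f C \<delta> = {E. \<exists>x\<in>C. E = {y\<in>C. sim_delta f C \<delta> x y}}"

definition sim_C :: "('a::metric_space \<Rightarrow> 'a) \<Rightarrow> 'a set \<Rightarrow> 'a \<Rightarrow> 'a \<Rightarrow> bool" where
  "sim_C f C x y \<longleftrightarrow> (\<forall>\<delta>>0. sim_delta f C \<delta> x y)"

definition classes_C :: "('a::metric_space \<Rightarrow> 'a) \<Rightarrow> 'a set \<Rightarrow> 'a set set" where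
  "classes_C f C = {D. \<exists>x\<in>C. D = {y\<in>C. sim_C f C x y}}"

definition D_delta :: "('a::metric_space \<Rightarrow> 'a) \<Rightarrow> 'a set \<Rightarrow> real \<Rightarrow> 'a set \<Rightarrow> 'a set" where
  "D_delta f C \<delta> D = (THE E. E \<in> classes_delta f C \<delta> \<and> D \<subseteq> E)"

definition Ws :: "('a::metric_space \<Rightarrow> 'a) \<Rightarrow> 'a set \<Rightarrow> 'a set" where
  "Ws f C = {x. (\<lambda>i. infdist ((f ^^ i) x) C) \<longlonglongrightarrow> 0}"

definition Vs :: "('a::metric_space \<Rightarrow> 'a) \<Rightarrow> 'a set \<Rightarrow> 'a set \<Rightarrow> 'a set" where
  "Vs f C D = (\<Inter>\<delta>\<in>{\<delta>::real. \<delta> > 0}.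
      {x\<in>Ws f C. (\<lambda>i. infdist ((f ^^ i) x) ((f ^^ i) ` D_delta f C \<delta> D)) \<longlonglongrightarrow> 0})"

definition s_limit_shadowing :: "('a::metric_space \<Rightarrow> 'a) \<Rightarrow> bool" where
  "s_limit_shadowing f \<longleftrightarrow>
     (\<forall>\<epsilon>>0. \<exists>\<delta>>0. \<forall>xi::nat \<Rightarrow> 'a.
        ((\<forall>i. dist (f (xi i)) (xi (Suc i)) \<le> \<delta>) \<and> (\<lambda>i. dist (f (xi i)) (xi (Suc i))) \<longlonglongrightarrow> 0)
        \<longrightarrow> (\<exists>x. (\<forall>i. dist ((f ^^ i) x) (xi i) \<le> \<epsilon>) \<and> (\<lambda>i. dist ((f ^^ i) x) (xi i)) \<longlonglongrightarrow> 0))"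

definition furstenberg_family :: "nat set set \<Rightarrow> bool" where
  "furstenberg_family F \<longleftrightarrow> F \<noteq> {} \<and> F \<noteq> UNIV \<and> (\<forall>A B. A \<in> F \<and> A \<subseteq> B \<longrightarrow> B \<in> F)"

definition full_family :: "nat set set \<Rightarrow> bool" where
  "full_family F \<longleftrightarrow> furstenberg_family F \<and> (\<forall>A\<in>F. \<forall>n. {i\<in>A. i \<ge> n} \<in> F)"

definition T_set :: "('a::metric_space \<Rightarrow> 'a) \<Rightarrow> nat \<Rightarrow> (nat \<Rightarrow> 'a) \<Rightarrow> real \<Rightarrow> nat set" where
  "T_set f n x r = {i. Max {dist ((f ^^ i) (x j)) ((f ^^ i) (x k)) | j k. j < k \<and> k < n} < r}"

text \<open>Dense subset of a finite product S^n (product topology, indices 0..n-1).\<close>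
definition dense_in_tuples :: "nat \<Rightarrow> (nat \<Rightarrow> 'a::metric_space) set \<Rightarrow> (nat \<Rightarrow> 'a) set \<Rightarrow> bool" where
  "dense_in_tuples n B S \<longleftrightarrow> B \<subseteq> S \<and> (\<forall>x\<in>S. \<forall>e>0. \<exists>y\<in>B. \<forall>i<n. dist (x i) (y i) < e)"

end

theory Submission
  imports Defs
begin

text \<open>
  Given \<open>x, z \<in> V\<^sup>s(D)\<close> and \<open>\<epsilon> > 0\<close>, s-limit shadowing reduces the search for a point
  \<open>\<epsilon>\<close>-close to \<open>x\<close> and asymptotic to \<open>z\<close> to the construction of a \<open>\<delta>\<close>-chain that follows
  the orbit of \<open>x\<close> up to some time \<open>N\<close>, then runs inside \<open>C\<close>, and lands exactly at time
  \<open>N + P\<close> on the orbit of \<open>z\<close>; continued by that orbit, it is a \<open>\<delta>\<close>-limit-pseudo orbit.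
  For large \<open>N\<close> and \<open>N + P\<close> the points \<open>f\<^bsup>N\<^esup> x\<close> and \<open>f\<^bsup>N+P\<^esup> z\<close> are close to images of
  the same class \<open>D\<^sub>\<delta>\<close>, which fixes modulo \<open>m(C, \<delta>)\<close> the length of chains in \<open>C\<close> between
  the corresponding nearby points. By compactness, chains in \<open>C\<close> from a fixed point exist for
  all large lengths in a given residue class, uniformly in the endpoint, so the required chain
  exists. Approximating every coordinate of a tuple by points asymptotic to its first
  coordinate then gives a tuple in \<open>[V\<^sup>s(D)]\<^sup>n\<close> all of whose sets \<open>T\<^sub>f(\<dots>; \<epsilon>)\<close> are
  cofinite, hence in the full family \<open>G\<close>.
\<close>

lemma add_closed_nat_set_large_multiples:
  fixes S :: "nat set"
  assumes zero: "0 \<in> S" and add: "\<And>s t. s \<in> S \<Longrightarrow> t \<in> S \<Longrightarrow> s + t \<in> S"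
    and pos: "s0 \<in> S" "0 < s0"
  shows "\<exists>d T. 0 < d \<and> (\<forall>s\<in>S. d dvd s) \<and> (\<forall>k\<ge>T. k * d \<in> S)"
proof -
  have mult: "j * s \<in> S" if "s \<in> S" for j s
    by (induction j) (use zero add that in auto)
  define gap where "gap t \<longleftrightarrow> 0 < t \<and> (\<exists>s\<in>S. s + t \<in> S)" for t
  define d where "d = (LEAST t. gap t)"
  have "gap s0" using zero pos unfolding gap_def by force
  then have "gap d" unfolding d_def by (rule LeastI)
  then obtain s where s: "s \<in> S" "s + d \<in> S" "0 < d" unfolding gap_def by blast
  have dvd: "d dvd t" if "t \<in> S" for t
  proof -
    have "t + (t div d) * s = (t div d) * (s + d) + t mod d"
      by (simp add: algebra_simps)
    moreover have "t + (t div d) * s \<in> S" "(t div d) * (s + d) \<in> S"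
      using add mult that s by auto
    ultimately have "gap (t mod d)" if "t mod d \<noteq> 0" using that unfolding gap_def by auto
    moreover have "\<not> gap (t mod d)" using not_less_Least[of "t mod d" gap] s(3) unfolding d_def by auto
    ultimately show ?thesis by auto
  qed
  obtain u where u: "s = u * d" using dvd[OF s(1)] by (metis dvdE mult.commute)
  have "k * d \<in> S" if k: "u * u \<le> k" for k
  proof (cases "u = 0")
    case True
    then show ?thesis using mult[OF s(2)] u by simp
  next
    case False
    have "k mod u < u" "u \<le> k div u" using div_le_mono[OF k, of u] False by simp_all
    then obtain v where v: "k div u = k mod u + v" using le_Suc_ex by (metis less_imp_le order_trans)
    have "k * d = ((k div u) * u + k mod u) * d" by simp
    also have "\<dots> = v * s + (k mod u) * (s + d)" unfolding u v by (simp add: algebra_simps)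
    finally have "k * d = v * s + (k mod u) * (s + d)" .
    then show ?thesis using add mult s by auto
  qed
  then show ?thesis using s(3) dvd by blast
qed

section \<open>Chains of arbitrary length\<close>

text \<open>Unlike \<^const>\<open>is_chain\<close> and \<^const>\<open>chain_in\<close>, these notions allow chains of length 0.\<close>

definition chain_seq :: "('a::metric_space \<Rightarrow> 'a) \<Rightarrow> 'a set \<Rightarrow> real \<Rightarrow> (nat \<Rightarrow> 'a) \<Rightarrow> nat \<Rightarrow> bool" where
  "chain_seq f C \<delta> xi k \<longleftrightarrow> (\<forall>i<k. dist (f (xi i)) (xi (Suc i)) \<le> \<delta>) \<and> (\<forall>i\<le>k. xi i \<in> C)"

definition chain_reach :: "('a::metric_space \<Rightarrow> 'a) \<Rightarrow> 'a set \<Rightarrow> real \<Rightarrow> 'a \<Rightarrow> 'a \<Rightarrow> nat \<Rightarrow> bool" where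
  "chain_reach f C \<delta> x y k \<longleftrightarrow> (\<exists>xi. chain_seq f C \<delta> xi k \<and> xi 0 = x \<and> xi k = y)"

lemma chain_in_iff_chain_seq: "chain_in f C \<delta> xi k \<longleftrightarrow> 1 \<le> k \<and> chain_seq f C \<delta> xi k"
  unfolding chain_in_def is_chain_def chain_seq_def by auto

lemma chain_to_iff_chain_reach: "chain_to f x y \<longleftrightarrow> (\<forall>\<delta>>0. \<exists>k\<ge>1. chain_reach f UNIV \<delta> x y k)"
  unfolding chain_to_def chain_reach_def chain_seq_def is_chain_def by (auto; blast)

lemma sim_delta_iff_chain_reach:
  "sim_delta f C \<delta> x y \<longleftrightarrow> (\<exists>k\<ge>1. chain_reach f C \<delta> x y k \<and> period_m f C \<delta> dvd k)"
  unfolding sim_delta_def chain_reach_def chain_in_iff_chain_seq by blast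

lemma period_m_eq_Gcd_cycles:
  "period_m f C \<delta> = Gcd {k. 1 \<le> k \<and> (\<exists>x. chain_reach f C \<delta> x x k)}"
  unfolding period_m_def chain_reach_def chain_in_iff_chain_seq by (intro arg_cong[where f = Gcd]) auto

lemma period_m_dvd_cycle: "chain_reach f C \<delta> x x k \<Longrightarrow> 1 \<le> k \<Longrightarrow> period_m f C \<delta> dvd k"
  unfolding period_m_eq_Gcd_cycles by (rule Gcd_dvd) blast

lemma chain_reach_in: "chain_reach f C \<delta> x y k \<Longrightarrow> x \<in> C \<and> y \<in> C"
  unfolding chain_reach_def chain_seq_def by auto

lemma chain_reach_0_iff: "chain_reach f C \<delta> x y 0 \<longleftrightarrow> x = y \<and> x \<in> C"
  unfolding chain_reach_def chain_seq_def by auto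

lemma chain_reach_mono:
  "chain_reach f C \<delta> x y k \<Longrightarrow> \<delta> \<le> \<delta>' \<Longrightarrow> C \<subseteq> C' \<Longrightarrow> chain_reach f C' \<delta>' x y k"
  unfolding chain_reach_def chain_seq_def by (metis order_trans subsetD)

lemma chain_reach_trans:
  assumes "chain_reach f C \<delta> x y k" "chain_reach f C \<delta> y z l"
  shows "chain_reach f C \<delta> x z (k + l)"
proof -
  obtain xi where xi: "chain_seq f C \<delta> xi k" "xi 0 = x" "xi k = y"
    using assms(1) chain_reach_def by metis
  obtain yi where yi: "chain_seq f C \<delta> yi l" "yi 0 = y" "yi l = z"
    using assms(2) chain_reach_def by metis
  define zi where "zi i = (if i \<le> k then xi i else yi (i - k))" for i
  have "chain_seq f C \<delta> zi (k + l)"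
    unfolding chain_seq_def
  proof safe
    fix i assume i: "i < k + l"
    show "dist (f (zi i)) (zi (Suc i)) \<le> \<delta>"
    proof (cases "i < k")
      case True
      then show ?thesis using xi(1) unfolding chain_seq_def zi_def by auto
    next
      case False
      then have "zi i = yi (i - k)" "zi (Suc i) = yi (Suc (i - k))" "i - k < l"
        using i xi(3) yi(2) unfolding zi_def by (auto simp: Suc_diff_le)
      then show ?thesis using yi(1) unfolding chain_seq_def by auto
    qed
  next
    fix i assume "i \<le> k + l"
    then show "zi i \<in> C" using xi(1) yi(1) unfolding chain_seq_def zi_def by auto
  qed
  moreover have "zi 0 = x" "zi (k + l) = z" using xi yi unfolding zi_def by auto
  ultimately show ?thesis unfolding chain_reach_def by blast
qed

lemma period_m_dvd_return:
  assumes "sim_delta f C \<delta> w a" "chain_reach f C \<delta> a w l"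
  shows "period_m f C \<delta> dvd l"
proof -
  obtain s where s: "1 \<le> s" "chain_reach f C \<delta> w a s" "period_m f C \<delta> dvd s"
    using assms(1) unfolding sim_delta_iff_chain_reach by blast
  have "period_m f C \<delta> dvd s + l"
    using period_m_dvd_cycle[OF chain_reach_trans[OF s(2) assms(2)]] s(1) by simp
  then show ?thesis using s(3) by (simp add: dvd_add_right_iff)
qed

lemma chain_reach_split:
  assumes "chain_seq f C \<delta> xi k" "i \<le> k"
  shows "chain_reach f C \<delta> (xi 0) (xi i) i" "chain_reach f C \<delta> (xi i) (xi k) (k - i)"
proof -
  show "chain_reach f C \<delta> (xi 0) (xi i) i"
    unfolding chain_reach_def using assms unfolding chain_seq_def by (intro exI[of _ xi]) auto
  show "chain_reach f C \<delta> (xi i) (xi k) (k - i)"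
    unfolding chain_reach_def using assms unfolding chain_seq_def
    by (intro exI[of _ "\<lambda>j. xi (j + i)"]) auto
qed

lemma chain_reach_orbit:
  assumes "\<And>i. i \<le> k \<Longrightarrow> (f ^^ i) x \<in> C" "0 \<le> \<delta>"
  shows "chain_reach f C \<delta> x ((f ^^ k) x) k"
  unfolding chain_reach_def chain_seq_def using assms by (intro exI[of _ "\<lambda>i. (f ^^ i) x"]) auto

lemma chain_reach_move_last:
  assumes "chain_reach f C \<delta> x y k" "1 \<le> k" "z \<in> C" "dist y z \<le> e"
  shows "chain_reach f C (\<delta> + e) x z k"
proof -
  obtain xi where xi: "chain_seq f C \<delta> xi k" "xi 0 = x" "xi k = y"
    using assms(1) chain_reach_def by metis
  have "chain_seq f C (\<delta> + e) (xi(k := z)) k"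
    unfolding chain_seq_def
  proof safe
    fix i assume i: "i < k"
    have step: "dist (f (xi i)) (xi (Suc i)) \<le> \<delta>" using xi(1) i unfolding chain_seq_def by blast
    have "0 \<le> e" using assms(4) zero_le_dist[of y z] by linarith
    show "dist (f ((xi(k := z)) i)) ((xi(k := z)) (Suc i)) \<le> \<delta> + e"
    proof (cases "Suc i = k")
      case True
      have "dist (f (xi i)) z \<le> dist (f (xi i)) y + dist y z" by (rule dist_triangle)
      then show ?thesis using True i step xi(3) assms(4) by auto
    next
      case False
      then show ?thesis using i step \<open>0 \<le> e\<close> by auto
    qed
  qed (use xi(1) assms(3) in \<open>auto simp: chain_seq_def\<close>)
  then show ?thesis using xi(2) assms(2) unfolding chain_reach_def
    by (intro exI[of _ "xi(k := z)"]) auto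
qed

lemma chain_reach_move_first:
  assumes "chain_reach f C \<delta> x y k" "1 \<le> k" "x' \<in> C" "dist (f x') (f x) \<le> e"
  shows "chain_reach f C (\<delta> + e) x' y k"
proof -
  obtain xi where xi: "chain_seq f C \<delta> xi k" "xi 0 = x" "xi k = y"
    using assms(1) chain_reach_def by metis
  have "chain_seq f C (\<delta> + e) (xi(0 := x')) k"
    unfolding chain_seq_def
  proof safe
    fix i assume i: "i < k"
    have step: "dist (f (xi i)) (xi (Suc i)) \<le> \<delta>" using xi(1) i unfolding chain_seq_def by blast
    have "0 \<le> e" using assms(4) zero_le_dist[of "f x'" "f x"] by linarith
    show "dist (f ((xi(0 := x')) i)) ((xi(0 := x')) (Suc i)) \<le> \<delta> + e"
    proof (cases "i = 0")
      case True
      have "dist (f x') (xi 1) \<le> dist (f x') (f x) + dist (f x) (xi 1)" by (rule dist_triangle)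
      then show ?thesis using True step xi(2) assms(4) by auto
    next
      case False
      then show ?thesis using step \<open>0 \<le> e\<close> by auto
    qed
  qed (use xi(1) assms(3) in \<open>auto simp: chain_seq_def\<close>)
  then show ?thesis using xi(3) assms(2) unfolding chain_reach_def
    by (intro exI[of _ "xi(0 := x')"]) auto
qed

lemma chain_reach_of_nearby_chain:
  assumes xi: "chain_seq f UNIV \<gamma> xi K" and ends: "xi 0 \<in> C" "xi K \<in> C"
    and near: "\<And>i. 0 < i \<Longrightarrow> i < K \<Longrightarrow> \<exists>c\<in>C. dist (xi i) c < \<eta>" and "0 < \<eta>"
    and modulus: "\<And>u v. dist u v < \<eta> \<Longrightarrow> dist (f u) (f v) < \<epsilon>" and "\<epsilon> + \<gamma> + \<eta> \<le> \<delta>"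
  shows "chain_reach f C \<delta> (xi 0) (xi K) K"
proof -
  obtain cc where cc: "\<And>i. 0 < i \<Longrightarrow> i < K \<Longrightarrow> cc i \<in> C \<and> dist (xi i) (cc i) < \<eta>"
    using near by metis
  define ch where "ch i = (if 0 < i \<and> i < K then cc i else xi i)" for i
  have ch: "ch i \<in> C" "dist (xi i) (ch i) < \<eta>" if "i \<le> K" for i
    using cc[of i] that ends \<open>0 < \<eta>\<close> unfolding ch_def by (auto simp: le_less)
  have "chain_seq f C \<delta> ch K"
    unfolding chain_seq_def
  proof safe
    fix i assume i: "i < K"
    have "dist (f (ch i)) (f (xi i)) < \<epsilon>" using ch(2)[of i] i modulus by (simp add: dist_commute)
    moreover have "dist (f (xi i)) (xi (Suc i)) \<le> \<gamma>" using xi i unfolding chain_seq_def by blast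
    moreover have "dist (xi (Suc i)) (ch (Suc i)) < \<eta>" using ch(2)[of "Suc i"] i by simp
    ultimately show "dist (f (ch i)) (ch (Suc i)) \<le> \<delta>"
      using dist_triangle[of "f (ch i)" "ch (Suc i)" "f (xi i)"]
        dist_triangle[of "f (xi i)" "ch (Suc i)" "xi (Suc i)"] \<open>\<epsilon> + \<gamma> + \<eta> \<le> \<delta>\<close> by linarith
  qed (use ch(1) in blast)
  moreover have "ch 0 = xi 0" "ch K = xi K" unfolding ch_def by auto
  ultimately show ?thesis unfolding chain_reach_def by metis
qed

lemma chain_to_trans: "chain_to f x y \<Longrightarrow> chain_to f y z \<Longrightarrow> chain_to f x z"
  unfolding chain_to_iff_chain_reach by (meson chain_reach_trans trans_le_add1)

lemma chain_to_of_tendsto_target: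
  assumes "p \<longlonglongrightarrow> y"
    and "\<And>\<delta>. \<delta> > 0 \<Longrightarrow> \<forall>\<^sub>F i in sequentially. \<exists>k\<ge>1. chain_reach f UNIV \<delta> x (p i) k"
  shows "chain_to f x y"
  unfolding chain_to_iff_chain_reach
proof (intro allI impI)
  fix \<delta> :: real assume "\<delta> > 0"
  have "\<forall>\<^sub>F i in sequentially. (\<exists>k\<ge>1. chain_reach f UNIV (\<delta>/2) x (p i) k) \<and> dist (p i) y < \<delta>/2"
    using assms(2) tendstoD[OF assms(1), of "\<delta>/2"] \<open>\<delta> > 0\<close> by (intro eventually_conj) auto
  then obtain i k where "1 \<le> k" "chain_reach f UNIV (\<delta>/2) x (p i) k" "dist (p i) y < \<delta>/2"
    using eventually_happens'[OF sequentially_bot] by blast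
  then have "chain_reach f UNIV (\<delta>/2 + \<delta>/2) x y k"
    by (intro chain_reach_move_last) auto
  then show "\<exists>k\<ge>1. chain_reach f UNIV \<delta> x y k" using \<open>1 \<le> k\<close> by auto
qed

lemma chain_to_of_tendsto_source:
  assumes "p \<longlonglongrightarrow> y" "isCont f y"
    and "\<And>\<delta>. \<delta> > 0 \<Longrightarrow> \<forall>\<^sub>F i in sequentially. \<exists>k\<ge>1. chain_reach f UNIV \<delta> (p i) x k"
  shows "chain_to f y x"
  unfolding chain_to_iff_chain_reach
proof (intro allI impI)
  fix \<delta> :: real assume "\<delta> > 0"
  have "(\<lambda>i. f (p i)) \<longlonglongrightarrow> f y" using isCont_tendsto_compose[OF assms(2,1)] .
  from tendstoD[OF this, of "\<delta>/2"]
  have "\<forall>\<^sub>F i in sequentially.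
      (\<exists>k\<ge>1. chain_reach f UNIV (\<delta>/2) (p i) x k) \<and> dist (f y) (f (p i)) < \<delta>/2"
    using assms(3) \<open>\<delta> > 0\<close> by (intro eventually_conj) (auto simp: dist_commute)
  then obtain i k where "1 \<le> k" "chain_reach f UNIV (\<delta>/2) (p i) x k" "dist (f y) (f (p i)) < \<delta>/2"
    using eventually_happens'[OF sequentially_bot] by blast
  then have "chain_reach f UNIV (\<delta>/2 + \<delta>/2) y x k"
    by (intro chain_reach_move_first) auto
  then show "\<exists>k\<ge>1. chain_reach f UNIV \<delta> y x k" using \<open>1 \<le> k\<close> by auto
qed

section \<open>Shadowing and stable sets\<close>

lemma s_limit_shadowing_chain_to_orbit:
  assumes "s_limit_shadowing f" "0 < e"
  obtains \<delta> where "0 < \<delta>"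
    "\<And>x z M. chain_reach f UNIV \<delta> x ((f ^^ M) z) M \<Longrightarrow>
       \<exists>y. dist x y \<le> e \<and> (\<lambda>i. dist ((f ^^ i) y) ((f ^^ i) z)) \<longlonglongrightarrow> 0"
proof -
  obtain \<delta> where \<delta>: "0 < \<delta>" and shadow: "\<And>xi::nat \<Rightarrow> _.
      (\<forall>i. dist (f (xi i)) (xi (Suc i)) \<le> \<delta>) \<Longrightarrow> (\<lambda>i. dist (f (xi i)) (xi (Suc i))) \<longlonglongrightarrow> 0 \<Longrightarrow>
      \<exists>y. (\<forall>i. dist ((f ^^ i) y) (xi i) \<le> e) \<and> (\<lambda>i. dist ((f ^^ i) y) (xi i)) \<longlonglongrightarrow> 0"
    using assms unfolding s_limit_shadowing_def by blast
  have shadow_chain: "\<exists>y. dist x y \<le> e \<and> (\<lambda>i. dist ((f ^^ i) y) ((f ^^ i) z)) \<longlonglongrightarrow> 0"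
    if chain: "chain_reach f UNIV \<delta> x ((f ^^ M) z) M" for x z M
  proof -
    obtain xi where xi: "chain_seq f UNIV \<delta> xi M" "xi 0 = x" "xi M = (f ^^ M) z"
      using chain unfolding chain_reach_def by blast
    define pseudo where "pseudo i = (if i \<le> M then xi i else (f ^^ i) z)" for i
    have tail: "pseudo i = (f ^^ i) z" if "M \<le> i" for i
      using that xi(3) unfolding pseudo_def by auto
    have steps: "dist (f (pseudo i)) (pseudo (Suc i)) \<le> \<delta>" for i
    proof (cases "i < M")
      case True
      then show ?thesis using xi(1) unfolding chain_seq_def pseudo_def by auto
    next
      case False
      then show ?thesis using tail \<delta> by simp
    qed
    have "\<forall>\<^sub>F i in sequentially. dist (f (pseudo i)) (pseudo (Suc i)) = 0"
      unfolding eventually_sequentially using tail by (intro exI[of _ M]) simp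
    then have "(\<lambda>i. dist (f (pseudo i)) (pseudo (Suc i))) \<longlonglongrightarrow> 0"
      by (rule tendsto_eventually)
    then obtain y where y: "\<forall>i. dist ((f ^^ i) y) (pseudo i) \<le> e"
      "(\<lambda>i. dist ((f ^^ i) y) (pseudo i)) \<longlonglongrightarrow> 0"
      using shadow steps by blast
    have "dist ((f ^^ 0) y) (pseudo 0) \<le> e" using y(1) by blast
    then have "dist x y \<le> e" using xi(2) by (simp add: pseudo_def dist_commute)
    moreover have "\<forall>\<^sub>F i in sequentially. dist ((f ^^ i) y) (pseudo i) = dist ((f ^^ i) y) ((f ^^ i) z)"
      unfolding eventually_sequentially using tail by (intro exI[of _ M]) simp
    from Lim_transform_eventually[OF y(2) this]
    have "(\<lambda>i. dist ((f ^^ i) y) ((f ^^ i) z)) \<longlonglongrightarrow> 0" .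
    ultimately show ?thesis by blast
  qed
  show ?thesis by (rule that[OF \<delta> shadow_chain])
qed

lemma Vs_iff:
  "x \<in> Vs f C D \<longleftrightarrow> x \<in> Ws f C \<and>
     (\<forall>\<delta>>0. (\<lambda>i. infdist ((f ^^ i) x) ((f ^^ i) ` D_delta f C \<delta> D)) \<longlonglongrightarrow> 0)"
  unfolding Vs_def by auto (meson zero_less_one)

lemma tendsto_infdist_asymptotic:
  assumes "(\<lambda>i. infdist (g i) (S i)) \<longlonglongrightarrow> 0" "(\<lambda>i. dist (h i) (g i)) \<longlonglongrightarrow> 0"
  shows "(\<lambda>i. infdist (h i) (S i)) \<longlonglongrightarrow> 0"
proof (rule tendsto_sandwich[of "\<lambda>i. 0" _ _ "\<lambda>i. infdist (g i) (S i) + dist (h i) (g i)"])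
  show "(\<lambda>i. infdist (g i) (S i) + dist (h i) (g i)) \<longlonglongrightarrow> 0"
    using tendsto_add[OF assms] by simp
qed (auto simp: infdist_nonneg infdist_triangle)

lemma Vs_asymptotic:
  assumes "z \<in> Vs f C D" "(\<lambda>i. dist ((f ^^ i) y) ((f ^^ i) z)) \<longlonglongrightarrow> 0"
  shows "y \<in> Vs f C D"
proof -
  have "(\<lambda>i. infdist ((f ^^ i) y) C) \<longlonglongrightarrow> 0"
    using assms tendsto_infdist_asymptotic[of "\<lambda>i. (f ^^ i) z" "\<lambda>i. C" "\<lambda>i. (f ^^ i) y"]
    unfolding Vs_iff Ws_def by auto
  moreover have "(\<lambda>i. infdist ((f ^^ i) y) ((f ^^ i) ` D_delta f C \<delta> D)) \<longlonglongrightarrow> 0" if "0 < \<delta>" for \<delta>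
    using assms that tendsto_infdist_asymptotic[of "\<lambda>i. (f ^^ i) z" "\<lambda>i. (f ^^ i) ` D_delta f C \<delta> D"]
    unfolding Vs_iff by auto
  ultimately show ?thesis unfolding Vs_iff Ws_def by auto
qed

lemma infdist_less_imp_ex_dist_less:
  assumes "infdist p A < r" "A \<noteq> {}"
  shows "\<exists>a\<in>A. dist p a < r"
proof -
  have "bdd_below (dist p ` A)" by (rule bdd_belowI[of _ 0]) auto
  then show ?thesis using assms by (simp add: infdist_notempty cINF_less_iff)
qed

lemma full_family_eventually:
  assumes "full_family G" "\<forall>\<^sub>F i in sequentially. i \<in> T"
  shows "T \<in> G"
proof -
  obtain N where N: "\<And>i. N \<le> i \<Longrightarrow> i \<in> T" using assms(2) unfolding eventually_sequentially by blast
  obtain A where "A \<in> G" using assms(1) unfolding full_family_def furstenberg_family_def by blast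
  then have "{i\<in>A. N \<le> i} \<in> G" using assms(1) unfolding full_family_def by blast
  moreover have "{i\<in>A. N \<le> i} \<subseteq> T" using N by blast
  ultimately show ?thesis using assms(1) unfolding full_family_def furstenberg_family_def by blast
qed

lemma T_set_eventually:
  assumes "2 \<le> n" "0 < \<epsilon>" "\<And>j. j < n \<Longrightarrow> (\<lambda>i. dist ((f ^^ i) (y j)) ((f ^^ i) z)) \<longlonglongrightarrow> 0"
  shows "\<forall>\<^sub>F i in sequentially. i \<in> T_set f n y \<epsilon>"
proof -
  let ?pairs = "{(j, k). j < k \<and> k < n}"
  let ?d = "\<lambda>i p. dist ((f ^^ i) (y (fst p))) ((f ^^ i) (y (snd p)))"
  have fin: "finite ?pairs" by (rule finite_subset[of _ "{..<n} \<times> {..<n}"]) auto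
  have pair_eventually: "\<forall>\<^sub>F i in sequentially. ?d i p < \<epsilon>" if "p \<in> ?pairs" for p
  proof -
    obtain j k where p: "p = (j, k)" "j < k" "k < n" using \<open>p \<in> ?pairs\<close> by blast
    have "(\<lambda>i. dist ((f ^^ i) (y j)) ((f ^^ i) z) + dist ((f ^^ i) (y k)) ((f ^^ i) z)) \<longlonglongrightarrow> 0 + 0"
      using p assms(3) by (intro tendsto_add) auto
    then have "\<forall>\<^sub>F i in sequentially.
        dist ((f ^^ i) (y j)) ((f ^^ i) z) + dist ((f ^^ i) (y k)) ((f ^^ i) z) < \<epsilon>"
      using assms(2) by (intro order_tendstoD(2)) auto
    then show ?thesis unfolding p(1) fst_conv snd_conv
      by eventually_elim (rule le_less_trans[OF dist_triangle2])
  qed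
  have "\<forall>\<^sub>F i in sequentially. \<forall>p\<in>?pairs. ?d i p < \<epsilon>"
    by (rule eventually_ball_finite[OF fin]) (use pair_eventually in blast)
  then show ?thesis
  proof eventually_elim
    case (elim i)
    let ?S = "{dist ((f ^^ i) (y j)) ((f ^^ i) (y k)) | j k. j < k \<and> k < n}"
    have S: "?S = ?d i ` ?pairs" by force
    have "(0, 1) \<in> ?pairs" using assms(1) by simp
    then have "Max ?S < \<epsilon>" unfolding S using fin elim by (subst Max_less_iff) auto
    then show ?case unfolding T_set_def by simp
  qed
qed

lemma dense_in_tuples_T_set_if_asymptotic_dense:
  assumes G: "full_family G" and n: "2 \<le> n"
    and approx: "\<And>x z e. x \<in> V \<Longrightarrow> z \<in> V \<Longrightarrow> 0 < e \<Longrightarrow>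
       \<exists>y. dist x y < e \<and> (\<lambda>i. dist ((f ^^ i) y) ((f ^^ i) z)) \<longlonglongrightarrow> 0"
    and asymptotic: "\<And>y z. z \<in> V \<Longrightarrow> (\<lambda>i. dist ((f ^^ i) y) ((f ^^ i) z)) \<longlonglongrightarrow> 0 \<Longrightarrow> y \<in> V"
  shows "dense_in_tuples n
           (\<Inter>\<epsilon>\<in>{\<epsilon>::real. \<epsilon> > 0}. {x \<in> {..<n} \<rightarrow>\<^sub>E V. T_set f n x \<epsilon> \<in> G}) ({..<n} \<rightarrow>\<^sub>E V)"
proof -
  have "\<exists>y\<in>(\<Inter>\<epsilon>\<in>{\<epsilon>::real. \<epsilon> > 0}. {x \<in> {..<n} \<rightarrow>\<^sub>E V. T_set f n x \<epsilon> \<in> G}).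
          \<forall>j<n. dist (x j) (y j) < e"
    if x: "x \<in> {..<n} \<rightarrow>\<^sub>E V" and e: "0 < e" for x e
  proof -
    have "x 0 \<in> V" using x n by (simp add: PiE_iff)
    then have "\<forall>j. \<exists>yj. j < n \<longrightarrow>
        dist (x j) yj < e \<and> (\<lambda>i. dist ((f ^^ i) yj) ((f ^^ i) (x 0))) \<longlonglongrightarrow> 0"
      using approx[OF _ _ e] x by (simp add: PiE_iff)
    then obtain g where g: "\<And>j. j < n \<Longrightarrow> dist (x j) (g j) < e"
      "\<And>j. j < n \<Longrightarrow> (\<lambda>i. dist ((f ^^ i) (g j)) ((f ^^ i) (x 0))) \<longlonglongrightarrow> 0"
      by metis
    let ?y = "restrict g {..<n}"
    have "?y \<in> {..<n} \<rightarrow>\<^sub>E V"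
      using g(2) asymptotic[OF \<open>x 0 \<in> V\<close>] by (simp add: restrict_PiE_iff)
    moreover have "T_set f n ?y \<epsilon> \<in> G" if "0 < \<epsilon>" for \<epsilon>
      by (rule full_family_eventually[OF G T_set_eventually[OF n that, where z = "x 0"]])
        (simp add: g(2))
    ultimately show ?thesis using g(1) by (intro bexI[of _ ?y]) auto
  qed
  moreover have "(\<Inter>\<epsilon>\<in>{\<epsilon>::real. \<epsilon> > 0}. {x \<in> {..<n} \<rightarrow>\<^sub>E V. T_set f n x \<epsilon> \<in> G}) \<subseteq> {..<n} \<rightarrow>\<^sub>E V"
    using zero_less_one by blast
  ultimately show ?thesis unfolding dense_in_tuples_def by blast
qed

section \<open>Chains inside a chain component\<close>

locale chain_component_space =
  fixes f :: "'a::metric_space \<Rightarrow> 'a" and C :: "'a set" and x0 :: 'a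
  assumes compact_space: "compact (UNIV :: 'a set)" and continuous_f: "continuous_on UNIV f"
    and x0_CR: "x0 \<in> CR f" and C_eq: "C = {y \<in> CR f. chain_to f x0 y \<and> chain_to f y x0}"
begin

lemma uniformly_continuous_f: "0 < e \<Longrightarrow> \<exists>d>0. \<forall>u v. dist u v < d \<longrightarrow> dist (f u) (f v) < e"
  using compact_uniformly_continuous[OF continuous_f compact_space]
  unfolding uniformly_continuous_on_def by (metis UNIV_I)

lemma isCont_f: "isCont f y"
  using continuous_f continuous_on_eq_continuous_at open_UNIV by blast

lemma x0_in_C: "x0 \<in> C"
  using x0_CR unfolding C_eq CR_def by simp

lemma in_C_if_chain_to: "a \<in> C \<Longrightarrow> chain_to f a p \<Longrightarrow> chain_to f p a \<Longrightarrow> p \<in> C"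
  unfolding C_eq CR_def by (blast intro: chain_to_trans)

lemma chain_to_in_C: "a \<in> C \<Longrightarrow> b \<in> C \<Longrightarrow> chain_to f a b"
  unfolding C_eq by (blast intro: chain_to_trans)

lemma closed_C: "closed C"
  unfolding closed_sequential_limits
proof (intro allI impI, elim conjE)
  fix p y assume p: "\<forall>i. p i \<in> C" and y: "p \<longlonglongrightarrow> y"
  have "chain_to f x0 y"
    by (rule chain_to_of_tendsto_target[OF y]) (use p in \<open>auto simp: C_eq chain_to_iff_chain_reach\<close>)
  moreover have "chain_to f y x0"
    by (rule chain_to_of_tendsto_source[OF y isCont_f])
      (use p in \<open>auto simp: C_eq chain_to_iff_chain_reach\<close>)
  ultimately show "y \<in> C" using in_C_if_chain_to x0_in_C by blast
qed

lemma f_in_C: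
  assumes "y \<in> C"
  shows "f y \<in> C"
proof -
  have yy: "chain_to f y y" using assms unfolding C_eq CR_def by auto
  have "chain_to f (f y) y"
    unfolding chain_to_iff_chain_reach
  proof (intro allI impI)
    fix \<delta> :: real assume \<delta>: "0 < \<delta>"
    obtain d where d: "0 < d" "\<forall>u v. dist u v < d \<longrightarrow> dist (f u) (f v) < \<delta>/2"
      using uniformly_continuous_f[of "\<delta>/2"] \<delta> by auto
    define \<delta>' where "\<delta>' = min (\<delta>/2) (d/2)"
    have \<delta>': "0 < \<delta>'" "\<delta>' \<le> \<delta>/2" "\<delta>' < d" using \<delta> d unfolding \<delta>'_def by auto
    obtain k where k: "1 \<le> k" "chain_reach f UNIV \<delta>' y y k"
      using yy \<delta>' unfolding chain_to_iff_chain_reach by blast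
    \<comment> \<open>Going around the cycle twice guarantees that something remains after its first step.\<close>
    obtain xi where xi: "chain_seq f UNIV \<delta>' xi (k + k)" "xi 0 = y" "xi (k + k) = y"
      using chain_reach_trans[OF k(2) k(2)] unfolding chain_reach_def by blast
    have rest: "chain_reach f UNIV \<delta>' (xi 1) y (k + k - 1)"
      using chain_reach_split(2)[OF xi(1), of 1] k(1) xi(3) by auto
    have "dist (f (xi 0)) (xi 1) \<le> \<delta>'" using xi(1) k(1) unfolding chain_seq_def by auto
    then have "dist (f y) (xi 1) < d" using xi(2) \<delta>'(3) by simp
    then have "dist (f (f y)) (f (xi 1)) \<le> \<delta>/2" using d(2) by (simp add: less_imp_le)
    then have "chain_reach f UNIV (\<delta>' + \<delta>/2) (f y) y (k + k - 1)"
      by (intro chain_reach_move_first[OF rest]) (use k in auto)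
    then have "chain_reach f UNIV \<delta> (f y) y (k + k - 1)"
      by (rule chain_reach_mono) (use \<delta>' in auto)
    then show "\<exists>k\<ge>1. chain_reach f UNIV \<delta> (f y) y k" using k(1) by (intro exI[of _ "k + k - 1"]) auto
  qed
  moreover have "chain_to f y (f y)"
    unfolding chain_to_iff_chain_reach using chain_reach_orbit[of 1 f y UNIV]
    by (intro allI impI exI[of _ 1]) auto
  ultimately show ?thesis using in_C_if_chain_to assms by blast
qed

lemma funpow_in_C: "y \<in> C \<Longrightarrow> (f ^^ i) y \<in> C"
  by (induction i) (auto simp: f_in_C)

lemma chain_reach_orbit_C: "y \<in> C \<Longrightarrow> 0 \<le> \<delta> \<Longrightarrow> chain_reach f C \<delta> y ((f ^^ k) y) k"
  by (rule chain_reach_orbit) (auto simp: funpow_in_C)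

lemma near_C_if_chain_to_and_from:
  assumes a: "a \<in> C" and \<eta>: "0 < \<eta>"
  shows "\<exists>\<gamma>>0. \<forall>p. (\<exists>k\<ge>1. chain_reach f UNIV \<gamma> a p k) \<and> (\<exists>k\<ge>1. chain_reach f UNIV \<gamma> p a k)
            \<longrightarrow> (\<exists>c\<in>C. dist p c < \<eta>)"
proof (rule ccontr)
  let ?\<gamma> = "\<lambda>i. inverse (real (Suc i))"
  assume "\<not> ?thesis"
  then have "\<forall>i. \<exists>p. (\<exists>k\<ge>1. chain_reach f UNIV (?\<gamma> i) a p k) \<and>
      (\<exists>k\<ge>1. chain_reach f UNIV (?\<gamma> i) p a k) \<and> (\<forall>c\<in>C. \<not> dist p c < \<eta>)"
    by (metis inverse_positive_iff_positive of_nat_0_less_iff zero_less_Suc)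
  then obtain p where p: "\<And>i. \<exists>k\<ge>1. chain_reach f UNIV (?\<gamma> i) a (p i) k"
    "\<And>i. \<exists>k\<ge>1. chain_reach f UNIV (?\<gamma> i) (p i) a k" "\<And>i. \<forall>c\<in>C. \<not> dist (p i) c < \<eta>"
    by metis
  obtain y r where r: "strict_mono r" "(p \<circ> r) \<longlonglongrightarrow> y"
    using compact_imp_seq_compact[OF compact_space] unfolding seq_compact_def by blast
  have small: "\<forall>\<^sub>F i in sequentially. ?\<gamma> (r i) < \<delta>" if "0 < \<delta>" for \<delta> :: real
    using LIMSEQ_subseq_LIMSEQ[OF LIMSEQ_inverse_real_of_nat r(1)] that
    by (auto dest: order_tendstoD(2))
  have mono: "\<exists>k\<ge>1. chain_reach f UNIV \<delta> u v k" if "\<exists>k\<ge>1. chain_reach f UNIV \<gamma> u v k" "\<gamma> < \<delta>"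
    for u v \<gamma> \<delta> using that by (meson less_imp_le order_refl chain_reach_mono)
  have "chain_to f a y"
  proof (rule chain_to_of_tendsto_target[OF r(2)])
    fix \<delta> :: real assume "0 < \<delta>"
    show "\<forall>\<^sub>F i in sequentially. \<exists>k\<ge>1. chain_reach f UNIV \<delta> a ((p \<circ> r) i) k"
      using small[OF \<open>0 < \<delta>\<close>] by eventually_elim (metis p(1) mono comp_apply)
  qed
  moreover have "chain_to f y a"
  proof (rule chain_to_of_tendsto_source[OF r(2) isCont_f])
    fix \<delta> :: real assume "0 < \<delta>"
    show "\<forall>\<^sub>F i in sequentially. \<exists>k\<ge>1. chain_reach f UNIV \<delta> ((p \<circ> r) i) a k"
      using small[OF \<open>0 < \<delta>\<close>] by eventually_elim (metis p(2) mono comp_apply)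
  qed
  ultimately have "y \<in> C" using in_C_if_chain_to a by blast
  obtain i where "dist ((p \<circ> r) i) y < \<eta>"
    using eventually_happens'[OF sequentially_bot tendstoD[OF r(2) \<eta>]] by blast
  with p(3) \<open>y \<in> C\<close> show False by auto
qed

lemma chain_reach_within_C:
  assumes a: "a \<in> C" and b: "b \<in> C" and \<delta>: "0 < \<delta>"
  shows "\<exists>k\<ge>1. chain_reach f C \<delta> a b k"
proof -
  obtain \<eta>0 where \<eta>0: "0 < \<eta>0" "\<forall>u v. dist u v < \<eta>0 \<longrightarrow> dist (f u) (f v) < \<delta>/3"
    using uniformly_continuous_f[of "\<delta>/3"] \<delta> by auto
  define \<eta> where "\<eta> = min \<eta>0 (\<delta>/3)"
  have \<eta>: "0 < \<eta>" "\<eta> \<le> \<eta>0" "\<eta> \<le> \<delta>/3" using \<eta>0 \<delta> by (auto simp: \<eta>_def)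
  obtain \<gamma> where \<gamma>: "0 < \<gamma>" "\<And>p. (\<exists>k\<ge>1. chain_reach f UNIV \<gamma> a p k) \<Longrightarrow>
      (\<exists>k\<ge>1. chain_reach f UNIV \<gamma> p a k) \<Longrightarrow> \<exists>c\<in>C. dist p c < \<eta>"
    using near_C_if_chain_to_and_from[OF a \<eta>(1)] by blast
  define \<gamma>' where "\<gamma>' = min \<gamma> (\<delta>/3)"
  have \<gamma>': "0 < \<gamma>'" "\<gamma>' \<le> \<gamma>" "\<gamma>' \<le> \<delta>/3" using \<gamma> \<delta> by (auto simp: \<gamma>'_def)
  obtain K where K: "1 \<le> K" "chain_reach f UNIV \<gamma>' a b K"
    using chain_to_in_C[OF a b] \<gamma>'(1) unfolding chain_to_iff_chain_reach by blast
  obtain K' where K': "1 \<le> K'" "chain_reach f UNIV \<gamma>' b a K'"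
    using chain_to_in_C[OF b a] \<gamma>'(1) unfolding chain_to_iff_chain_reach by blast
  obtain xi where xi: "chain_seq f UNIV \<gamma>' xi K" "xi 0 = a" "xi K = b"
    using K(2) unfolding chain_reach_def by blast
  \<comment> \<open>Every point of a chain from \<open>a\<close> to \<open>b\<close> is chained to and from \<open>a\<close>, hence close to \<open>C\<close>.\<close>
  have near: "\<exists>c\<in>C. dist (xi i) c < \<eta>" if i: "0 < i" "i < K" for i
  proof (rule \<gamma>(2))
    have "chain_reach f UNIV \<gamma>' a (xi i) i" using chain_reach_split(1)[OF xi(1), of i] i xi(2) by auto
    then show "\<exists>k\<ge>1. chain_reach f UNIV \<gamma> a (xi i) k"
      using i(1) \<gamma>'(2) by (intro exI[of _ i]) (auto intro: chain_reach_mono)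
    have "chain_reach f UNIV \<gamma>' (xi i) b (K - i)"
      using chain_reach_split(2)[OF xi(1), of i] i xi(3) by auto
    from chain_reach_trans[OF this K'(2)]
    have "chain_reach f UNIV \<gamma>' (xi i) a (K - i + K')" .
    then show "\<exists>k\<ge>1. chain_reach f UNIV \<gamma> (xi i) a k"
      using K'(1) \<gamma>'(2) by (intro exI[of _ "K - i + K'"]) (auto intro: chain_reach_mono)
  qed
  have "chain_reach f C \<delta> (xi 0) (xi K) K"
    by (rule chain_reach_of_nearby_chain[OF xi(1) _ _ near \<eta>(1), where \<epsilon> = "\<delta>/3"])
      (use xi(2,3) a b \<eta>0(2) \<eta>(2,3) \<gamma>'(3) in auto)
  then show ?thesis using K(1) xi(2,3) by auto
qed

lemma chain_reach_bounded_length: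
  assumes c: "c \<in> C" and \<delta>: "0 < \<delta>"
  shows "\<exists>L. \<forall>q\<in>C. \<exists>l\<le>L. chain_reach f C \<delta> c q l"
proof (rule ccontr)
  assume "\<not> ?thesis"
  then obtain q where q: "\<And>L. q L \<in> C" "\<And>L l. l \<le> L \<Longrightarrow> \<not> chain_reach f C \<delta> c (q L) l"
    by metis
  obtain y r where r: "strict_mono r" "(q \<circ> r) \<longlonglongrightarrow> y"
    using compact_imp_seq_compact[OF compact_space] unfolding seq_compact_def by blast
  have "y \<in> C" using closed_C r(2) q(1) unfolding closed_sequential_limits by (metis comp_apply)
  then obtain l where l: "1 \<le> l" "chain_reach f C (\<delta>/2) c y l"
    using chain_reach_within_C[OF c, of y "\<delta>/2"] \<delta> by auto
  obtain N where N: "\<And>i. N \<le> i \<Longrightarrow> dist ((q \<circ> r) i) y < \<delta>/2"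
    using tendstoD[OF r(2), of "\<delta>/2"] \<delta> unfolding eventually_sequentially by auto
  define i where "i = max N l"
  have "dist y (q (r i)) \<le> \<delta>/2" using N[of i] by (simp add: i_def dist_commute)
  from chain_reach_move_last[OF l(2,1) q(1) this]
  have "chain_reach f C \<delta> c (q (r i)) l" by simp
  moreover have "l \<le> r i" using seq_suble[OF r(1), of i] by (simp add: i_def)
  ultimately show False using q(2) by blast
qed

lemma cycle_lengths_large_multiples:
  assumes c: "c \<in> C" and \<delta>: "0 < \<delta>"
  shows "\<exists>d T. 0 < d \<and> d dvd period_m f C \<delta> \<and> (\<forall>k\<ge>T. chain_reach f C \<delta> c c (k * d))"
proof -
  let ?S = "{s. chain_reach f C \<delta> c c s}"
  obtain s0 where "1 \<le> s0" "s0 \<in> ?S" using chain_reach_within_C[OF c c \<delta>] by auto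
  then obtain d T where d: "0 < d" "\<And>s. s \<in> ?S \<Longrightarrow> d dvd s" "\<And>k. T \<le> k \<Longrightarrow> k * d \<in> ?S"
    using add_closed_nat_set_large_multiples[of ?S s0] c
    by (auto simp: chain_reach_0_iff intro: chain_reach_trans)
  have "d dvd k" if "1 \<le> k" "chain_reach f C \<delta> p p k" for p k
  proof -
    have p: "p \<in> C" using chain_reach_in that(2) by blast
    obtain l1 where l1: "chain_reach f C \<delta> c p l1" using chain_reach_within_C[OF c p \<delta>] by blast
    obtain l2 where l2: "chain_reach f C \<delta> p c l2" using chain_reach_within_C[OF p c \<delta>] by blast
    have "d dvd l1 + l2" using d(2) chain_reach_trans[OF l1 l2] by simp
    moreover have "d dvd l1 + k + l2"
      using d(2) chain_reach_trans[OF chain_reach_trans[OF l1 that(2)] l2] by simp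
    ultimately show ?thesis by (metis add.commute add.left_commute dvd_add_right_iff)
  qed
  then have "d dvd period_m f C \<delta>"
    unfolding period_m_eq_Gcd_cycles by (intro Gcd_greatest) blast
  then show ?thesis using d by blast
qed

lemma chain_reach_shorten:
  assumes c: "c \<in> C" and \<delta>: "0 < \<delta>"
  shows "\<exists>P0. \<forall>q P K. chain_reach f C \<delta> c q (P + K) \<longrightarrow> period_m f C \<delta> dvd K \<longrightarrow> P0 \<le> P
           \<longrightarrow> chain_reach f C \<delta> c q P"
proof -
  let ?m = "period_m f C \<delta>"
  obtain L where L: "\<And>q. q \<in> C \<Longrightarrow> \<exists>l\<le>L. chain_reach f C \<delta> c q l"
    using chain_reach_bounded_length[OF c \<delta>] by blast
  obtain d T where dT: "0 < d" "d dvd ?m" "\<And>k. T \<le> k \<Longrightarrow> chain_reach f C \<delta> c c (k * d)"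
    using cycle_lengths_large_multiples[OF c \<delta>] by blast
  have "chain_reach f C \<delta> c q P"
    if chain: "chain_reach f C \<delta> c q (P + K)" and K: "?m dvd K" and P: "L + T * d \<le> P" for q P K
  proof -
    have q: "q \<in> C" using chain_reach_in chain by blast
    obtain l where l: "l \<le> L" "chain_reach f C \<delta> c q l" using L[OF q] by blast
    obtain l' where l': "1 \<le> l'" "chain_reach f C \<delta> q c l'"
      using chain_reach_within_C[OF q c \<delta>] by blast
    have "?m dvd P + K + l'" using period_m_dvd_cycle[OF chain_reach_trans[OF chain l'(2)]] l'(1) by simp
    moreover have "?m dvd l + l'" using period_m_dvd_cycle[OF chain_reach_trans[OF l(2) l'(2)]] l'(1) by simp
    moreover have "P + K + l' = (P - l) + K + (l + l')" using l(1) P by simp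
    ultimately have "?m dvd P - l" using K by (metis dvd_add_left_iff)
    then obtain k where k: "P - l = k * d" using dT(2) by (metis dvd_trans dvdE mult.commute)
    have "T * d \<le> k * d" using k l(1) P by linarith
    then have "chain_reach f C \<delta> c c (k * d)" using dT(1,3) by simp
    moreover have "k * d + l = P" using k l(1) P by linarith
    ultimately show ?thesis using chain_reach_trans[OF _ l(2)] by metis
  qed
  then show ?thesis by blast
qed

lemma sim_delta_refl: "w \<in> C \<Longrightarrow> 0 < \<delta> \<Longrightarrow> sim_delta f C \<delta> w w"
  unfolding sim_delta_iff_chain_reach using chain_reach_within_C period_m_dvd_cycle by blast

lemma D_delta_eq:
  assumes w0: "w0 \<in> C" and D: "D = {y\<in>C. sim_C f C w0 y}" and \<delta>: "0 < \<delta>"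
  shows "D_delta f C \<delta> D = {y\<in>C. sim_delta f C \<delta> w0 y}"
proof -
  let ?E = "{y\<in>C. sim_delta f C \<delta> w0 y}"
  let ?m = "period_m f C \<delta>"
  have w0D: "w0 \<in> D" using D w0 sim_delta_refl unfolding sim_C_def by auto
  have unique: "E = ?E" if E: "E \<in> classes_delta f C \<delta>" "D \<subseteq> E" for E
  proof -
    obtain w where w: "w \<in> C" "E = {y\<in>C. sim_delta f C \<delta> w y}"
      using E(1) unfolding classes_delta_def by blast
    obtain s where s: "1 \<le> s" "chain_reach f C \<delta> w w0 s" "?m dvd s"
      using E(2) w0D w unfolding sim_delta_iff_chain_reach by blast
    obtain l where l: "chain_reach f C \<delta> w0 w l" using chain_reach_within_C[OF w0 w(1) \<delta>] by blast
    have ml: "?m dvd l" using period_m_dvd_return[OF _ l] E(2) w0D w unfolding sim_delta_iff_chain_reach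
      by blast
    show ?thesis
    proof (rule set_eqI, rule iffI)
      fix y assume "y \<in> E"
      then obtain k where k: "y \<in> C" "1 \<le> k" "chain_reach f C \<delta> w y k" "?m dvd k"
        using w(2) unfolding sim_delta_iff_chain_reach by blast
      then show "y \<in> ?E" using chain_reach_trans[OF l k(3)] ml unfolding sim_delta_iff_chain_reach
        by (intro CollectI conjI exI[of _ "l + k"]) auto
    next
      fix y assume "y \<in> ?E"
      then obtain k where k: "y \<in> C" "1 \<le> k" "chain_reach f C \<delta> w0 y k" "?m dvd k"
        unfolding sim_delta_iff_chain_reach by blast
      then have "sim_delta f C \<delta> w y"
        using chain_reach_trans[OF s(2) k(3)] s(3) unfolding sim_delta_iff_chain_reach
        by (intro exI[of _ "s + k"]) auto
      then show "y \<in> E" using k(1) w(2) by blast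
    qed
  qed
  have "?E \<in> classes_delta f C \<delta> \<and> D \<subseteq> ?E"
    using w0 D \<delta> unfolding classes_delta_def sim_C_def by auto
  then show ?thesis unfolding D_delta_def using unique by (intro the_equality) auto
qed

lemma orbit_near_D_delta:
  assumes "p \<in> Vs f C D" "0 < \<delta>" "0 < \<eta>" "D_delta f C \<delta> D \<noteq> {}"
  shows "\<forall>\<^sub>F i in sequentially. \<exists>a\<in>D_delta f C \<delta> D. dist ((f ^^ i) p) ((f ^^ i) a) < \<eta>"
proof -
  have "(\<lambda>i. infdist ((f ^^ i) p) ((f ^^ i) ` D_delta f C \<delta> D)) \<longlonglongrightarrow> 0"
    using assms(1,2) unfolding Vs_iff by blast
  from order_tendstoD(2)[OF this assms(3)] show ?thesis
  proof eventually_elim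
    case (elim i)
    from infdist_less_imp_ex_dist_less[OF elim] assms(4) show ?case by blast
  qed
qed

lemma chain_reach_between_orbits_in_class:
  assumes w0: "w0 \<in> C" and \<gamma>: "0 < \<gamma>" and a: "sim_delta f C \<gamma> w0 a" and b: "sim_delta f C \<gamma> w0 b"
  shows "\<exists>L. chain_reach f C \<gamma> ((f ^^ N) a) ((f ^^ M) b) (L + M) \<and> period_m f C \<gamma> dvd N + L"
proof -
  let ?m = "period_m f C \<gamma>"
  obtain l3 where l3: "chain_reach f C \<gamma> w0 b l3" "?m dvd l3"
    using b unfolding sim_delta_iff_chain_reach by blast
  have aC: "a \<in> C" and bC: "b \<in> C"
    using a l3(1) chain_reach_in unfolding sim_delta_iff_chain_reach by blast+
  have orbit_a: "chain_reach f C \<gamma> a ((f ^^ N) a) N" using chain_reach_orbit_C[OF aC] \<gamma> by simp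
  have orbit_b: "chain_reach f C \<gamma> b ((f ^^ M) b) M" using chain_reach_orbit_C[OF bC] \<gamma> by simp
  obtain l1 where l1: "1 \<le> l1" "chain_reach f C \<gamma> ((f ^^ N) a) a l1"
    using chain_reach_within_C[OF funpow_in_C[OF aC] aC \<gamma>] by blast
  obtain l2 where l2: "chain_reach f C \<gamma> a w0 l2" using chain_reach_within_C[OF aC w0 \<gamma>] by blast
  have "?m dvd N + l1" using period_m_dvd_cycle[OF chain_reach_trans[OF orbit_a l1(2)]] l1(1) by simp
  moreover have "?m dvd l2" using period_m_dvd_return[OF a l2] .
  ultimately have "?m dvd (N + l1) + l2 + l3" using l3(2) by simp
  then have "?m dvd N + (l1 + l2 + l3)" by (simp add: add.assoc)
  moreover have "chain_reach f C \<gamma> ((f ^^ N) a) ((f ^^ M) b) (l1 + l2 + l3 + M)"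
    using chain_reach_trans[OF chain_reach_trans[OF chain_reach_trans[OF l1(2) l2] l3(1)] orbit_b] .
  ultimately show ?thesis by blast
qed

lemma chain_between_orbits:
  assumes w0: "w0 \<in> C" and D: "D = {y\<in>C. sim_C f C w0 y}"
    and x: "x \<in> Vs f C D" and z: "z \<in> Vs f C D" and \<gamma>: "0 < \<gamma>" and \<eta>: "0 < \<eta>"
  shows "\<exists>N P c q. 1 \<le> P \<and> dist ((f ^^ N) x) c < \<eta> \<and> dist q ((f ^^ (N + P)) z) < \<eta>
           \<and> chain_reach f C \<gamma> c q P"
proof -
  define E where "E = {y\<in>C. sim_delta f C \<gamma> w0 y}"
  have "w0 \<in> E" using sim_delta_refl w0 \<gamma> unfolding E_def by blast
  then have near: "\<forall>\<^sub>F i in sequentially. \<exists>a\<in>E. dist ((f ^^ i) p) ((f ^^ i) a) < \<eta>"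
    if "p \<in> Vs f C D" for p
    using orbit_near_D_delta[OF that \<gamma> \<eta>] D_delta_eq[OF w0 D \<gamma>] unfolding E_def by auto
  obtain N a where a: "a \<in> E" "dist ((f ^^ N) x) ((f ^^ N) a) < \<eta>"
    using eventually_happens'[OF sequentially_bot near[OF x]] by blast
  define c where "c = (f ^^ N) a"
  obtain P0 where P0: "\<And>q P K. chain_reach f C \<gamma> c q (P + K) \<Longrightarrow> period_m f C \<gamma> dvd K \<Longrightarrow>
      P0 \<le> P \<Longrightarrow> chain_reach f C \<gamma> c q P"
    using chain_reach_shorten[OF _ \<gamma>, of c] funpow_in_C a(1) unfolding c_def E_def by blast
  obtain M0 where M0: "\<And>i. M0 \<le> i \<Longrightarrow> \<exists>b\<in>E. dist ((f ^^ i) z) ((f ^^ i) b) < \<eta>"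
    using near[OF z] unfolding eventually_sequentially by blast
  define P where "P = M0 + P0 + 1"
  obtain b where b: "b \<in> E" "dist ((f ^^ (N + P)) z) ((f ^^ (N + P)) b) < \<eta>"
    using M0[of "N + P"] unfolding P_def by auto
  define q where "q = (f ^^ (N + P)) b"
  obtain L where "chain_reach f C \<gamma> c q (L + (N + P))" "period_m f C \<gamma> dvd N + L"
    using chain_reach_between_orbits_in_class[OF w0 \<gamma>] a(1) b(1) unfolding c_def q_def E_def by blast
  then have "chain_reach f C \<gamma> c q P" using P0[of q P "N + L"] unfolding P_def by (simp add: ac_simps)
  moreover have "dist ((f ^^ N) x) c < \<eta>" "dist q ((f ^^ (N + P)) z) < \<eta>"
    using a(2) b(2) unfolding c_def q_def by (simp_all add: dist_commute)
  moreover have "1 \<le> P" by (simp add: P_def)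
  ultimately show ?thesis by blast
qed

lemma Vs_approx_asymptotic:
  assumes w0: "w0 \<in> C" and D: "D = {y\<in>C. sim_C f C w0 y}" and shadowing: "s_limit_shadowing f"
    and x: "x \<in> Vs f C D" and z: "z \<in> Vs f C D" and e: "0 < e"
  shows "\<exists>y. dist x y < e \<and> (\<lambda>i. dist ((f ^^ i) y) ((f ^^ i) z)) \<longlonglongrightarrow> 0"
proof -
  have "0 < e/2" using e by simp
  obtain \<delta> where \<delta>: "0 < \<delta>" and shadow: "\<And>x z M. chain_reach f UNIV \<delta> x ((f ^^ M) z) M \<Longrightarrow>
      \<exists>y. dist x y \<le> e/2 \<and> (\<lambda>i. dist ((f ^^ i) y) ((f ^^ i) z)) \<longlonglongrightarrow> 0"
    by (rule s_limit_shadowing_chain_to_orbit[OF shadowing \<open>0 < e/2\<close>]) (rule that)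
  obtain \<eta>0 where \<eta>0: "0 < \<eta>0" "\<forall>u v. dist u v < \<eta>0 \<longrightarrow> dist (f u) (f v) < \<delta>/3"
    using uniformly_continuous_f[of "\<delta>/3"] \<delta> by auto
  define \<eta> where "\<eta> = min \<eta>0 (\<delta>/3)"
  have \<eta>: "0 < \<eta>" "\<eta> \<le> \<eta>0" "\<eta> \<le> \<delta>/3" using \<eta>0 \<delta> by (auto simp: \<eta>_def)
  obtain N P c q where P: "1 \<le> P" and c: "dist ((f ^^ N) x) c < \<eta>"
    and q: "dist q ((f ^^ (N + P)) z) < \<eta>" and cq: "chain_reach f C (\<delta>/3) c q P"
    using chain_between_orbits[OF w0 D x z _ \<eta>(1), of "\<delta>/3"] \<delta> by auto
  \<comment> \<open>Moving the endpoints of the chain onto the two orbits costs at most \<open>\<delta>/3\<close> each.\<close>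
  have "chain_reach f UNIV (\<delta>/3) c q P" by (rule chain_reach_mono[OF cq]) auto
  moreover have "dist (f ((f ^^ N) x)) (f c) \<le> \<delta>/3" using c \<eta>(2) \<eta>0(2) by (simp add: less_imp_le)
  ultimately have "chain_reach f UNIV (\<delta>/3 + \<delta>/3) ((f ^^ N) x) q P"
    using P by (intro chain_reach_move_first) auto
  then have "chain_reach f UNIV (\<delta>/3 + \<delta>/3 + \<delta>/3) ((f ^^ N) x) ((f ^^ (N + P)) z) P"
    by (rule chain_reach_move_last[OF _ P]) (use q \<eta>(3) in auto)
  then have "chain_reach f UNIV \<delta> ((f ^^ N) x) ((f ^^ (N + P)) z) P" by simp
  moreover have "chain_reach f UNIV \<delta> x ((f ^^ N) x) N" by (rule chain_reach_orbit) (use \<delta> in auto)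
  ultimately have "chain_reach f UNIV \<delta> x ((f ^^ (N + P)) z) (N + P)"
    using chain_reach_trans by blast
  then obtain y where "dist x y \<le> e/2" "(\<lambda>i. dist ((f ^^ i) y) ((f ^^ i) z)) \<longlonglongrightarrow> 0"
    using shadow by blast
  then show ?thesis using e by (intro exI[of _ y]) auto
qed

end

theorem theorem1p1:
  fixes f :: "'a::metric_space \<Rightarrow> 'a" and C D :: "'a set" and G :: "nat set set" and n :: nat
  assumes "compact (UNIV :: 'a set)"
    and "continuous_on UNIV f"
    and "s_limit_shadowing f"
    and "C \<in> chain_components f"
    and "D \<in> classes_C f C"
    and "full_family G"
    and "n \<ge> 2"
  shows "dense_in_tuples n
           (\<Inter>\<epsilon>\<in>{\<epsilon>::real. \<epsilon> > 0}. {x \<in> {..<n} \<rightarrow>\<^sub>E Vs f C D. T_set f n x \<epsilon> \<in> G})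
           ({..<n} \<rightarrow>\<^sub>E Vs f C D)"
proof -
  obtain x0 where "x0 \<in> CR f" "C = {y\<in>CR f. chain_to f x0 y \<and> chain_to f y x0}"
    using assms(4) unfolding chain_components_def by blast
  then interpret chain_component_space f C x0 using assms(1,2) by unfold_locales
  obtain w0 where w0: "w0 \<in> C" "D = {y\<in>C. sim_C f C w0 y}"
    using assms(5) unfolding classes_C_def by blast
  show ?thesis
    using assms(6,7) Vs_approx_asymptotic[OF w0 assms(3)] Vs_asymptotic
    by (rule dense_in_tuples_T_set_if_asymptotic_dense)
qed

end
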